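(* Let $n\ge 2$ be an integer, $\omega>0$ and $c>0$, and set $\mu_j=\omega^2+c\,(j-1)$ for $j=1,\dots,n$. Define $$\beta_j=-\sqrt{\mu_j}+\frac{1}{n-1}\sum_{k=1}^n\sqrt{\mu_k},\qquad j=1,\dots,n.$$ If $$c<\frac{2(2n-3)\,\omega^2}{(n-1)(n^2-3n+4)},$$ then $\beta_j>0$ for all $j=1,\dots,n$.
   Context: The $\mu_j$ are the eigenvalues of the interaction matrix $A=\omega^2 I+cM_{\rm K}$, where $M_{\rm K}$ (the Krawtchouk matrix) has eigenvalues $\lambda_j=j-1$; $c$ is the coupling strength. *)

theory Defs
  imports Complex_Main
begin

definition mu :: "real \<Rightarrow> real \<Rightarrow> nat \<Rightarrow> real" where
  "mu \<omega> c j = \<omega>^2 + c * (real j - 1)"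

definition beta :: "nat \<Rightarrow> real \<Rightarrow> real \<Rightarrow> nat \<Rightarrow> real" where
  "beta n \<omega> c j = - sqrt (mu \<omega> c j) + (1 / (real n - 1)) * (\<Sum>k=1..n. sqrt (mu \<omega> c k))"

end

theory Submission
  imports Defs
begin

text \<open>
  Since \<open>\<mu>\<^sub>j\<close> increases with \<open>j\<close>, the smallest \<open>\<beta>\<^sub>j\<close> is \<open>\<beta>\<^sub>n\<close>, and \<open>\<beta>\<^sub>n > 0\<close> says that the
  total deficit \<open>\<Sum>\<^sub>k (\<surd>\<mu>\<^sub>n - \<surd>\<mu>\<^sub>k)\<close> is less than \<open>\<surd>\<mu>\<^sub>n\<close>. Rationalising,
  \<open>\<surd>\<mu>\<^sub>n - \<surd>\<mu>\<^sub>k = c (n - k) / (\<surd>\<mu>\<^sub>n + \<surd>\<mu>\<^sub>k) \<le> c (n - k) / (\<surd>\<mu>\<^sub>n + \<omega>)\<close>, so the deficit is at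
  most \<open>c n (n - 1) / (2 (\<surd>\<mu>\<^sub>n + \<omega>))\<close>. Using \<open>\<mu>\<^sub>n = \<omega>\<^sup>2 + c (n - 1)\<close> and \<open>\<surd>\<mu>\<^sub>n \<ge> \<omega>\<close>, this is
  below \<open>\<surd>\<mu>\<^sub>n\<close> as soon as \<open>c (n - 1) (n - 2) < 4 \<omega>\<^sup>2\<close>, which the hypothesis on \<open>c\<close> implies
  because \<open>(2n - 3)(n - 2) \<le> 2 (n\<^sup>2 - 3n + 4)\<close>.
\<close>

lemma sum_diff_from_top_eq:
  "(\<Sum>k=1..n. real n - real k) = real n * (real n - 1) / 2"
proof -
  have "(\<Sum>k=1..n. real n - real k) = real n * real n - (\<Sum>k=1..n. real k)"
    by (simp add: sum_subtractf)
  then show ?thesis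
    using double_gauss_sum_from_Suc_0 [of n, where 'a = real] by (simp add: algebra_simps)
qed

lemma sqrt_diff_le_divide:
  fixes a b \<omega> :: real
  assumes "0 < \<omega>" and "\<omega>\<^sup>2 \<le> a" and "a \<le> b"
  shows "sqrt b - sqrt a \<le> (b - a) / (sqrt b + \<omega>)"
proof -
  have "0 \<le> a" and "0 \<le> b"
    using assms(2,3) zero_le_power2 [of \<omega>] by linarith+
  have "\<omega> \<le> sqrt a" and "sqrt a \<le> sqrt b"
    using assms real_le_rsqrt by auto
  then have "(sqrt b - sqrt a) * (sqrt b + \<omega>) \<le> (sqrt b - sqrt a) * (sqrt b + sqrt a)"
    by (intro mult_left_mono) auto
  also have "\<dots> = b - a"
    using \<open>0 \<le> a\<close> \<open>0 \<le> b\<close> by (simp add: algebra_simps)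
  moreover have "0 < sqrt b + \<omega>"
    using \<open>0 \<le> b\<close> assms(1) by (simp add: add_nonneg_pos)
  ultimately show ?thesis
    by (simp add: pos_le_divide_eq)
qed

lemma mu_ge_square:
  assumes "1 \<le> j" and "0 \<le> c"
  shows "\<omega>\<^sup>2 \<le> mu \<omega> c j"
  using assms by (simp add: mu_def)

lemma mu_mono:
  assumes "j \<le> k" and "0 \<le> c"
  shows "mu \<omega> c j \<le> mu \<omega> c k"
  using assms by (simp add: mu_def mult_left_mono)

lemma sum_sqrt_mu_deficit_le:
  assumes "0 < \<omega>" and "0 \<le> c"
  shows "real n * sqrt (mu \<omega> c n) - (\<Sum>k=1..n. sqrt (mu \<omega> c k))
           \<le> c * real n * (real n - 1) / (2 * (sqrt (mu \<omega> c n) + \<omega>))"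
proof -
  let ?S = "sqrt (mu \<omega> c n)"
  have "real n * ?S - (\<Sum>k=1..n. sqrt (mu \<omega> c k)) = (\<Sum>k=1..n. ?S - sqrt (mu \<omega> c k))"
    by (simp add: sum_subtractf)
  also have "\<dots> \<le> (\<Sum>k=1..n. c * (real n - real k) / (?S + \<omega>))"
  proof (rule sum_mono)
    fix k assume "k \<in> {1..n}"
    then have "?S - sqrt (mu \<omega> c k) \<le> (mu \<omega> c n - mu \<omega> c k) / (?S + \<omega>)"
      using assms by (intro sqrt_diff_le_divide mu_ge_square mu_mono) auto
    then show "?S - sqrt (mu \<omega> c k) \<le> c * (real n - real k) / (?S + \<omega>)"
      by (simp add: mu_def algebra_simps)
  qed
  also have "\<dots> = c / (?S + \<omega>) * (\<Sum>k=1..n. real n - real k)"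
    by (simp add: sum_distrib_left)
  also have "\<dots> = c * real n * (real n - 1) / (2 * (?S + \<omega>))"
    unfolding sum_diff_from_top_eq by (simp add: mult_ac)
  finally show ?thesis .
qed

lemma coupling_bound_imp:
  fixes n :: nat and \<omega> c :: real
  assumes "2 \<le> n" and "0 \<le> c"
    and "c < 2 * (2 * real n - 3) * \<omega>\<^sup>2 / ((real n - 1) * ((real n)\<^sup>2 - 3 * real n + 4))"
  shows "c * (real n - 1) * (real n - 2) < 4 * \<omega>\<^sup>2"
proof -
  have "(real n)\<^sup>2 - 3 * real n + 4 = (real n - 3/2)\<^sup>2 + 7/4"
    by (simp add: power2_eq_square algebra_simps)
  then have "0 < (real n - 1) * ((real n)\<^sup>2 - 3 * real n + 4)"
    using assms(1) by (simp add: add_nonneg_pos)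
  then have bound: "c * ((real n - 1) * ((real n)\<^sup>2 - 3 * real n + 4)) < 2 * (2 * real n - 3) * \<omega>\<^sup>2"
    using assms(3) by (simp add: pos_less_divide_eq mult.commute)
  have "(2 * real n - 3) * (real n - 2) \<le> 2 * ((real n)\<^sup>2 - 3 * real n + 4)"
    using assms(1) by (simp add: power2_eq_square algebra_simps)
  then have "c * (real n - 1) * ((2 * real n - 3) * (real n - 2))
               \<le> c * (real n - 1) * (2 * ((real n)\<^sup>2 - 3 * real n + 4))"
    using assms(1,2) by (intro mult_left_mono) auto
  with bound have "(2 * real n - 3) * (c * (real n - 1) * (real n - 2)) < (2 * real n - 3) * (4 * \<omega>\<^sup>2)"
    by (simp add: algebra_simps)
  then show ?thesis
    using assms(1) by (simp add: mult_less_cancel_left)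
qed

lemma sum_sqrt_mu_deficit_less:
  assumes "1 \<le> n" and "0 < \<omega>" and "0 \<le> c"
    and "c * (real n - 1) * (real n - 2) < 4 * \<omega>\<^sup>2"
  shows "(real n - 1) * sqrt (mu \<omega> c n) < (\<Sum>k=1..n. sqrt (mu \<omega> c k))"
proof -
  let ?S = "sqrt (mu \<omega> c n)"
  have "\<omega> \<le> ?S"
    using assms by (intro real_le_rsqrt mu_ge_square) auto
  then have "\<omega>\<^sup>2 \<le> ?S * \<omega>"
    using assms(2) by (simp add: power2_eq_square mult_right_mono)
  moreover have "?S\<^sup>2 = \<omega>\<^sup>2 + c * (real n - 1)"
    using assms by (simp add: mu_def)
  ultimately have "c * real n * (real n - 1) < 2 * (?S + \<omega>) * ?S"
    using assms(4) by (simp add: power2_eq_square algebra_simps)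
  then have "c * real n * (real n - 1) / (2 * (?S + \<omega>)) < ?S"
    using \<open>\<omega> \<le> ?S\<close> assms(2) by (simp add: pos_divide_less_eq mult.commute)
  with sum_sqrt_mu_deficit_le [OF assms(2,3), of n] show ?thesis
    by (simp add: algebra_simps)
qed

lemma beta_pos_if_sum_sqrt_mu_large:
  assumes "2 \<le> n" and "0 \<le> c" and "j \<in> {1..n}"
    and "(real n - 1) * sqrt (mu \<omega> c n) < (\<Sum>k=1..n. sqrt (mu \<omega> c k))"
  shows "0 < beta n \<omega> c j"
proof -
  have "sqrt (mu \<omega> c j) \<le> sqrt (mu \<omega> c n)"
    using assms(2,3) by (simp add: mu_mono)
  also have "\<dots> < (\<Sum>k=1..n. sqrt (mu \<omega> c k)) / (real n - 1)"
    using assms(1,4) by (simp add: pos_less_divide_eq mult.commute)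
  finally show ?thesis
    by (simp add: beta_def)
qed

theorem proposition3:
  fixes n :: nat and \<omega> c :: real
  assumes "n \<ge> 2" and "\<omega> > 0" and "c > 0"
    and "c < 2 * (2 * real n - 3) * \<omega>^2 / ((real n - 1) * ((real n)^2 - 3 * real n + 4))"
  shows "\<forall>j\<in>{1..n}. beta n \<omega> c j > 0"
proof
  fix j assume "j \<in> {1..n}"
  have "c * (real n - 1) * (real n - 2) < 4 * \<omega>\<^sup>2"
    using assms by (intro coupling_bound_imp) auto
  then have "(real n - 1) * sqrt (mu \<omega> c n) < (\<Sum>k=1..n. sqrt (mu \<omega> c k))"
    using assms by (intro sum_sqrt_mu_deficit_less) auto
  then show "beta n \<omega> c j > 0"
    using assms \<open>j \<in> {1..n}\<close> by (intro beta_pos_if_sum_sqrt_mu_large) auto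
qed

end
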